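(* Let $X$ be a pure $d$-dimensional simplicial complex, $0\le k\le d-1$, $0\le i\le d-k$, $\sigma\in X(k+i)$ and $r$ a face of $R_k(X)$ with $\bigcup r=\sigma$. Then $$w_{R_k(X)}(r)=\frac{1}{|\{r'\in R_k(X):\textstyle\bigcup r'=\sigma\}|}\,w_X(\sigma),$$ where $|\{r':\bigcup r'=\sigma\}|=\binom{k+i+1}{k}$ if $i>0$ and $=1$ if $i=0$.
   Context: $X(j)$ = faces with $j+1$ elements. For a pure $D$-dimensional complex $Y$, $w_Y(\sigma)=|\{\tau\in Y(D):\sigma\subseteq\tau\}|/(\binom{D+1}{|\sigma|}|Y(D)|)$. The representation complex $R_k(X)$ has vertex set $X(k)$ (a vertex $\tau$ is identified with $\{\tau\}$, so $\bigcup\{\tau\}=\tau$) and, for $1\le i\le d-k$, $i$-faces the sets $S$ of $i+1$ distinct elements of $X(k)$ with $\bigcup S\in X(i+k)$ and $|\bigcap S|=k$; it is pure of dimension $d-k$ and carries its own weights $w_{R_k(X)}$. *)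

theory Defs
  imports Complex_Main
begin

definition simplicial_complex :: "'a set set \<Rightarrow> bool" where
  "simplicial_complex X \<longleftrightarrow> finite X \<and> (\<forall>s\<in>X. finite s) \<and>
     (\<forall>s\<in>X. \<forall>t. t \<subseteq> s \<and> t \<noteq> {} \<longrightarrow> t \<in> X)"

definition faces :: "'a set set \<Rightarrow> nat \<Rightarrow> 'a set set" where
  "faces X j = {s \<in> X. card s = j + 1}"

definition pure_complex :: "nat \<Rightarrow> 'a set set \<Rightarrow> bool" where
  "pure_complex d X \<longleftrightarrow> simplicial_complex X \<and> (\<forall>s\<in>X. card s \<le> d + 1) \<and>
     (\<forall>s\<in>X. \<exists>t\<in>faces X d. s \<subseteq> t)"

definition weight :: "nat \<Rightarrow> 'a set set \<Rightarrow> 'a set \<Rightarrow> real" where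
  "weight D Y \<sigma> = real (card {\<tau> \<in> faces Y D. \<sigma> \<subseteq> \<tau>}) /
     (real ((D + 1) choose card \<sigma>) * real (card (faces Y D)))"

definition rep_complex :: "nat \<Rightarrow> nat \<Rightarrow> 'a set set \<Rightarrow> 'a set set set" where
  "rep_complex d k X =
     {{\<tau>} | \<tau>. \<tau> \<in> faces X k} \<union>
     {S. \<exists>i. 1 \<le> i \<and> i \<le> d - k \<and> S \<subseteq> faces X k \<and> card S = i + 1 \<and>
             \<Union>S \<in> faces X (i + k) \<and> card (\<Inter>S) = k}"

end

theory Submission
  imports Defs
begin

(* A face of R_k(X) with at least two vertices is determined by its union tau and its
   intersection C: it consists of all (k+1)-subsets of tau containing the k-set C.  Hence the
   top faces of R_k(X) correspond to the pairs (tau, C) with tau in X(d) and C a k-subset of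
   tau, and a face r lies in the top face (tau, C) iff the union of r lies in tau and C lies in
   the intersection of r.  Counting such pairs, the number of faces with union sigma times
   binom(|intersection r|, k) is binom(|sigma|, k) in both cases i = 0 and i > 0, and the
   identity binom(d+1, k+i+1) binom(k+i+1, k) = binom(d+1, k) binom(d-k+1, i+1) converts the
   weight of sigma in X into the weight of r in R_k(X). *)

(* The face of R_k(X) with union tau and intersection C. *)
definition star :: "'a set \<Rightarrow> 'a set \<Rightarrow> 'a set set" where
  "star C \<tau> = (\<lambda>x. insert x C) ` (\<tau> - C)"

lemma mem_star_iff:
  assumes "finite C" "C \<subseteq> \<tau>"
  shows "s \<in> star C \<tau> \<longleftrightarrow> C \<subseteq> s \<and> s \<subseteq> \<tau> \<and> card s = Suc (card C)"
proof
  assume "C \<subseteq> s \<and> s \<subseteq> \<tau> \<and> card s = Suc (card C)"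
  then have "C \<subseteq> s" "s \<subseteq> \<tau>" "card (s - C) = 1"
    using assms(1) by (auto simp: card_Diff_subset)
  then obtain x where "s - C = {x}"
    by (meson card_1_singletonE)
  with \<open>C \<subseteq> s\<close> \<open>s \<subseteq> \<tau>\<close> show "s \<in> star C \<tau>"
    unfolding star_def by (intro image_eqI[of _ _ x]) auto
qed (use assms in \<open>auto simp: star_def\<close>)

lemma card_star: "card (star C \<tau>) = card (\<tau> - C)"
  unfolding star_def by (rule card_image) (auto simp: inj_on_def insert_ident)

lemma Union_star: "C \<subset> \<tau> \<Longrightarrow> \<Union>(star C \<tau>) = \<tau>"
  unfolding star_def by auto

lemma Inter_star:
  assumes "2 \<le> card (\<tau> - C)"
  shows "\<Inter>(star C \<tau>) = C"
proof -
  obtain x y where "x \<in> \<tau> - C" "y \<in> \<tau> - C" "x \<noteq> y"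
    using assms by (auto simp: numeral_2_eq_2 card_le_Suc_iff)
  then show ?thesis unfolding star_def by auto
qed

lemma subset_star_iff:
  assumes "finite C" "C \<subseteq> \<tau>" "r \<noteq> {}" "\<forall>s\<in>r. card s = Suc (card C)"
  shows "r \<subseteq> star C \<tau> \<longleftrightarrow> C \<subseteq> \<Inter>r \<and> \<Union>r \<subseteq> \<tau>"
proof -
  have "r \<subseteq> star C \<tau> \<longleftrightarrow> (\<forall>s\<in>r. C \<subseteq> s \<and> s \<subseteq> \<tau>)"
    using assms(4) by (auto simp: subset_eq mem_star_iff[OF assms(1,2)])
  then show ?thesis
    using assms(3) by blast
qed

lemma card_faces: "s \<in> faces X j \<Longrightarrow> card s = Suc j"
  by (simp add: faces_def)

lemma finite_faces: "s \<in> faces X j \<Longrightarrow> finite s"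
  using card_faces by (fastforce intro: card_ge_0_finite)

lemma eq_star_Inter_Union:
  assumes "S \<subseteq> faces X k" "S \<noteq> {}" "card (\<Inter>S) = k"
  shows "S = star (\<Inter>S) (\<Union>S)"
proof -
  let ?C = "\<Inter>S"
  from assms(2) obtain s0 where "s0 \<in> S" by blast
  then have "finite s0" "?C \<subseteq> s0"
    using assms(1) finite_faces by auto
  then have "finite ?C"
    by (rule finite_subset[rotated])
  have insert_Inter: "\<exists>x. s = insert x ?C \<and> x \<notin> ?C" if "s \<in> S" for s
  proof -
    have "card (s - ?C) = 1"
      using that assms(1,3) \<open>finite ?C\<close> card_faces[of s X k]
      by (subst card_Diff_subset) auto
    then obtain x where "s - ?C = {x}"
      by (meson card_1_singletonE)
    then show ?thesis
      using that by blast
  qed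
  show ?thesis
  proof (rule set_eqI)
    fix t
    have "t \<in> star ?C (\<Union>S) \<longleftrightarrow> (\<exists>x. x \<in> \<Union>S - ?C \<and> t = insert x ?C)"
      unfolding star_def by blast
    also have "\<dots> \<longleftrightarrow> t \<in> S"
      using insert_Inter by blast
    finally show "t \<in> S \<longleftrightarrow> t \<in> star ?C (\<Union>S)" ..
  qed
qed

lemma rep_complex_cases:
  assumes "S \<in> rep_complex d k X"
  obtains (vertex) \<tau> where "\<tau> \<in> faces X k" "S = {\<tau>}"
  | (star) i where "1 \<le> i" "i \<le> d - k" "card S = i + 1" "\<Union>S \<in> faces X (i + k)"
      "card (\<Inter>S) = k" "S = star (\<Inter>S) (\<Union>S)"
proof (cases "\<exists>\<tau>. \<tau> \<in> faces X k \<and> S = {\<tau>}")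
  case False
  then obtain i where "1 \<le> i" "i \<le> d - k" "S \<subseteq> faces X k" "card S = i + 1"
      "\<Union>S \<in> faces X (i + k)" "card (\<Inter>S) = k"
    using assms unfolding rep_complex_def by blast
  moreover have "S \<noteq> {}"
    using \<open>card S = i + 1\<close> by auto
  ultimately show thesis
    using star eq_star_Inter_Union by blast
qed (use vertex in blast)

lemma rep_complex_subset_faces: "S \<in> rep_complex d k X \<Longrightarrow> S \<subseteq> faces X k"
  unfolding rep_complex_def by blast

lemma rep_complex_nonempty: "S \<in> rep_complex d k X \<Longrightarrow> S \<noteq> {}"
  unfolding rep_complex_def by auto

lemma Union_rep_complex:
  assumes "S \<in> rep_complex d k X"
  shows "\<Union>S \<in> X" "card (\<Union>S) = card S + k"
proof -
  from assms have "\<Union>S \<in> X \<and> card (\<Union>S) = card S + k"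
  proof (cases rule: rep_complex_cases)
    case (star i)
    then show ?thesis
      using star(3,4) by (simp add: faces_def)
  qed (simp add: faces_def)
  then show "\<Union>S \<in> X" "card (\<Union>S) = card S + k"
    by simp_all
qed

lemma card_rep_complex_le:
  assumes "S \<in> rep_complex d k X"
  shows "card S \<le> d - k + 1"
  using assms by (cases rule: rep_complex_cases) simp_all

lemma star_mem_rep_complex:
  assumes "simplicial_complex X" "\<tau> \<in> X" "k + 2 \<le> card \<tau>" "card \<tau> \<le> d + 1"
    and "C \<subseteq> \<tau>" "card C = k"
  shows "star C \<tau> \<in> rep_complex d k X"
proof -
  define i where "i = card \<tau> - k - 1"
  have "1 \<le> i" "i \<le> d - k"
    using assms(3,4) unfolding i_def by auto
  have "finite \<tau>"
    using assms(3) by (intro card_ge_0_finite) simp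
  then have "finite C"
    using assms(5) by (rule finite_subset[rotated])
  have card_diff: "card (\<tau> - C) = i + 1"
    using assms(3,5,6) \<open>finite C\<close> unfolding i_def by (simp add: card_Diff_subset)
  have "star C \<tau> \<subseteq> faces X k"
  proof
    fix s assume "s \<in> star C \<tau>"
    then have "s \<subseteq> \<tau>" "s \<noteq> {}" "card s = k + 1"
      using mem_star_iff[OF \<open>finite C\<close> assms(5)] assms(6) by auto
    then show "s \<in> faces X k"
      using assms(1,2) unfolding simplicial_complex_def faces_def by blast
  qed
  moreover have "card (star C \<tau>) = i + 1"
    using card_diff by (simp add: card_star)
  moreover have "\<Union>(star C \<tau>) \<in> faces X (i + k)"
    using assms(2-5) card_diff by (subst Union_star) (auto simp: faces_def i_def)
  moreover have "card (\<Inter>(star C \<tau>)) = k"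
    using assms(6) card_diff \<open>1 \<le> i\<close> by (subst Inter_star) auto
  ultimately show ?thesis
    using \<open>1 \<le> i\<close> \<open>i \<le> d - k\<close> unfolding rep_complex_def by blast
qed

lemma bij_betw_star_rep_complex:
  assumes "simplicial_complex X"
    and "\<And>\<tau>. \<tau> \<in> T \<Longrightarrow> \<tau> \<in> X \<and> k + 2 \<le> card \<tau> \<and> card \<tau> \<le> d + 1"
  shows "bij_betw (\<lambda>(\<tau>, C). star C \<tau>) (SIGMA \<tau>:T. {C. C \<subseteq> \<tau> \<and> card C = k})
           {S \<in> rep_complex d k X. \<Union>S \<in> T}"
proof (rule bij_betw_byWitness[where f' = "\<lambda>S. (\<Union>S, \<Inter>S)"])
  have Union_Inter_star: "\<Union>(star C \<tau>) = \<tau> \<and> \<Inter>(star C \<tau>) = C"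
    if "\<tau> \<in> T" "C \<subseteq> \<tau>" "card C = k" for \<tau> C
  proof -
    have "finite \<tau>"
      using assms(2)[OF that(1)] by (intro card_ge_0_finite) simp
    then have "2 \<le> card (\<tau> - C)"
      using assms(2)[OF that(1)] that(2,3) by (auto simp: card_Diff_subset finite_subset)
    then show ?thesis
      using that(2) by (intro conjI Union_star Inter_star) auto
  qed
  show "\<forall>p \<in> SIGMA \<tau>:T. {C. C \<subseteq> \<tau> \<and> card C = k}.
          (\<lambda>S. (\<Union>S, \<Inter>S)) ((\<lambda>(\<tau>, C). star C \<tau>) p) = p"
    using Union_Inter_star by auto
  show "(\<lambda>(\<tau>, C). star C \<tau>) ` (SIGMA \<tau>:T. {C. C \<subseteq> \<tau> \<and> card C = k})
          \<subseteq> {S \<in> rep_complex d k X. \<Union>S \<in> T}"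
    using Union_Inter_star assms star_mem_rep_complex by fastforce
  have "S = star (\<Inter>S) (\<Union>S) \<and> \<Inter>S \<subseteq> \<Union>S \<and> card (\<Inter>S) = k"
    if "S \<in> rep_complex d k X" "\<Union>S \<in> T" for S
    using that(1)
  proof (cases rule: rep_complex_cases)
    case (vertex \<tau>)
    then show ?thesis
      using assms(2)[OF that(2)] by (simp add: faces_def)
  next
    case (star i)
    then have "S \<noteq> {}"
      by auto
    with star show ?thesis
      by blast
  qed
  then show "\<forall>S \<in> {S \<in> rep_complex d k X. \<Union>S \<in> T}.
          (\<lambda>(\<tau>, C). star C \<tau>) ((\<lambda>S. (\<Union>S, \<Inter>S)) S) = S"
    and "(\<lambda>S. (\<Union>S, \<Inter>S)) ` {S \<in> rep_complex d k X. \<Union>S \<in> T}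
          \<subseteq> (SIGMA \<tau>:T. {C. C \<subseteq> \<tau> \<and> card C = k})"
    by auto
qed

lemma card_rep_complex_fiber:
  assumes "simplicial_complex X" "\<sigma> \<in> X" "k + 2 \<le> card \<sigma>" "card \<sigma> \<le> d + 1"
  shows "card {S \<in> rep_complex d k X. \<Union>S = \<sigma>} = card \<sigma> choose k"
proof -
  have "finite \<sigma>"
    using assms(3) by (intro card_ge_0_finite) simp
  have "bij_betw (\<lambda>(\<tau>, C). star C \<tau>) (SIGMA \<tau>:{\<sigma>}. {C. C \<subseteq> \<tau> \<and> card C = k})
          {S \<in> rep_complex d k X. \<Union>S \<in> {\<sigma>}}"
    by (rule bij_betw_star_rep_complex) (use assms in auto)
  then have "card {S \<in> rep_complex d k X. \<Union>S = \<sigma>}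
      = card (SIGMA \<tau>:{\<sigma>}. {C. C \<subseteq> \<tau> \<and> card C = k})"
    by (simp add: bij_betw_same_card)
  also have "\<dots> = card {C. C \<subseteq> \<sigma> \<and> card C = k}"
    using \<open>finite \<sigma>\<close> by (simp add: finite_subset)
  also have "\<dots> = card \<sigma> choose k"
    using \<open>finite \<sigma>\<close> by (rule n_subsets)
  finally show ?thesis
    by simp
qed

lemma rep_complex_fiber_vertex:
  assumes "\<tau> \<in> faces X k"
  shows "{S \<in> rep_complex d k X. \<Union>S = \<tau>} = {{\<tau>}}"
proof (intro equalityI subsetI)
  fix S assume S: "S \<in> {S \<in> rep_complex d k X. \<Union>S = \<tau>}"
  then have "card S = 1"
    using Union_rep_complex(2)[of S d k X] card_faces[OF assms] by simp
  then obtain t where "S = {t}"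
    by (rule card_1_singletonE)
  with S show "S \<in> {{\<tau>}}"
    by simp
next
  fix S assume "S \<in> {{\<tau>}}"
  with assms show "S \<in> {S \<in> rep_complex d k X. \<Union>S = \<tau>}"
    unfolding rep_complex_def by blast
qed

lemma bij_betw_star_top_faces_rep_complex:
  assumes "simplicial_complex X" "k < d"
  shows "bij_betw (\<lambda>(\<tau>, C). star C \<tau>) (SIGMA \<tau>:faces X d. {C. C \<subseteq> \<tau> \<and> card C = k})
           (faces (rep_complex d k X) (d - k))"
proof -
  have "faces (rep_complex d k X) (d - k) = {S \<in> rep_complex d k X. \<Union>S \<in> faces X d}"
    using assms(2) Union_rep_complex[of _ d k X] by (auto simp: faces_def)
  then show ?thesis
    by (simp only:) (rule bij_betw_star_rep_complex, use assms in \<open>auto simp: faces_def\<close>)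
qed

lemma card_top_faces_rep_complex:
  assumes "simplicial_complex X" "k < d"
  shows "card (faces (rep_complex d k X) (d - k)) = card (faces X d) * ((d + 1) choose k)"
proof -
  have "finite (faces X d)"
    using assms(1) by (simp add: simplicial_complex_def faces_def)
  have "card (faces (rep_complex d k X) (d - k))
      = card (SIGMA \<tau>:faces X d. {C. C \<subseteq> \<tau> \<and> card C = k})"
    using bij_betw_star_top_faces_rep_complex[OF assms] by (rule bij_betw_same_card[symmetric])
  also have "\<dots> = (\<Sum>\<tau>\<in>faces X d. card {C. C \<subseteq> \<tau> \<and> card C = k})"
    using \<open>finite (faces X d)\<close> by (intro card_SigmaI ballI) (auto simp: finite_faces)
  also have "\<dots> = (\<Sum>\<tau>\<in>faces X d. (d + 1) choose k)"
    by (intro sum.cong refl) (simp add: n_subsets finite_faces card_faces)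
  finally show ?thesis
    by simp
qed

lemma rep_complex_subset_star_iff:
  assumes "r \<in> rep_complex d k X" "finite \<tau>" "C \<subseteq> \<tau>" "card C = k"
  shows "r \<subseteq> star C \<tau> \<longleftrightarrow> C \<subseteq> \<Inter>r \<and> \<Union>r \<subseteq> \<tau>"
proof (rule subset_star_iff)
  show "finite C"
    using assms(2,3) by (rule finite_subset[rotated])
  show "r \<noteq> {}" "\<forall>s\<in>r. card s = Suc (card C)"
    using assms(1,4) rep_complex_nonempty rep_complex_subset_faces card_faces by blast+
qed (use assms in simp)

lemma card_top_cofaces_rep_complex:
  assumes "simplicial_complex X" "k < d" "r \<in> rep_complex d k X"
  shows "card {T \<in> faces (rep_complex d k X) (d - k). r \<subseteq> T}
       = card {\<tau> \<in> faces X d. \<Union>r \<subseteq> \<tau>} * (card (\<Inter>r) choose k)"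
proof -
  let ?P = "SIGMA \<tau>:faces X d. {C. C \<subseteq> \<tau> \<and> card C = k}"
  obtain s where "s \<in> r" "s \<in> faces X k"
    using assms(3) rep_complex_nonempty rep_complex_subset_faces by blast
  then have "\<Inter>r \<subseteq> \<Union>r" "finite (\<Inter>r)"
    using finite_faces by (auto intro: finite_subset[of _ s])
  have "bij_betw (\<lambda>(\<tau>, C). star C \<tau>) {p \<in> ?P. r \<subseteq> (\<lambda>(\<tau>, C). star C \<tau>) p}
          {T \<in> faces (rep_complex d k X) (d - k). r \<subseteq> T}"
    using bij_betw_star_top_faces_rep_complex[OF assms(1,2)] by (rule bij_betw_Collect) simp
  then have "card {T \<in> faces (rep_complex d k X) (d - k). r \<subseteq> T}
      = card {p \<in> ?P. r \<subseteq> (\<lambda>(\<tau>, C). star C \<tau>) p}"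
    by (rule bij_betw_same_card[symmetric])
  also have "{p \<in> ?P. r \<subseteq> (\<lambda>(\<tau>, C). star C \<tau>) p}
      = {\<tau> \<in> faces X d. \<Union>r \<subseteq> \<tau>} \<times> {C. C \<subseteq> \<Inter>r \<and> card C = k}"
  proof (rule set_eqI)
    fix p :: "'a set \<times> 'a set"
    obtain \<tau> C where p: "p = (\<tau>, C)"
      by fastforce
    have "(\<tau>, C) \<in> {p \<in> ?P. r \<subseteq> (\<lambda>(\<tau>, C). star C \<tau>) p}
        \<longleftrightarrow> \<tau> \<in> faces X d \<and> C \<subseteq> \<tau> \<and> card C = k \<and> C \<subseteq> \<Inter>r \<and> \<Union>r \<subseteq> \<tau>"
      using rep_complex_subset_star_iff[OF assms(3) finite_faces, of \<tau> X d C] by auto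
    also have "\<dots> \<longleftrightarrow> (\<tau>, C) \<in> {\<tau> \<in> faces X d. \<Union>r \<subseteq> \<tau>} \<times> {C. C \<subseteq> \<Inter>r \<and> card C = k}"
      using \<open>\<Inter>r \<subseteq> \<Union>r\<close> by blast
    finally show "p \<in> {p \<in> ?P. r \<subseteq> (\<lambda>(\<tau>, C). star C \<tau>) p}
        \<longleftrightarrow> p \<in> {\<tau> \<in> faces X d. \<Union>r \<subseteq> \<tau>} \<times> {C. C \<subseteq> \<Inter>r \<and> card C = k}"
      unfolding p .
  qed
  also have "card \<dots> = card {\<tau> \<in> faces X d. \<Union>r \<subseteq> \<tau>} * (card (\<Inter>r) choose k)"
    using \<open>finite (\<Inter>r)\<close> by (simp add: card_cartesian_product n_subsets)
  finally show ?thesis .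
qed

lemma card_rep_complex_fiber_face:
  assumes "simplicial_complex X" "i \<le> d - k" "\<sigma> \<in> faces X (k + i)"
  shows "card {S \<in> rep_complex d k X. \<Union>S = \<sigma>} = (if i > 0 then (k + i + 1) choose k else 1)"
proof (cases "i > 0")
  case True
  have "\<sigma> \<in> X" "card \<sigma> = k + i + 1"
    using assms(3) by (simp_all add: faces_def)
  with True assms(1,2) show ?thesis
    using card_rep_complex_fiber[of X \<sigma> k d] by simp
next
  case False
  with assms(3) show ?thesis
    using rep_complex_fiber_vertex[of \<sigma> X k d] by simp
qed

lemma card_fiber_mult_choose_Inter_rep_complex:
  assumes "simplicial_complex X" "r \<in> rep_complex d k X"
  shows "card {S \<in> rep_complex d k X. \<Union>S = \<Union>r} * (card (\<Inter>r) choose k) = card (\<Union>r) choose k"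
  using assms(2)
proof (cases rule: rep_complex_cases)
  case (vertex \<tau>)
  then show ?thesis
    using rep_complex_fiber_vertex[of \<tau> X k d] by simp
next
  case (star i)
  then have "\<Union>r \<in> X" "card (\<Union>r) = k + i + 1"
    by (simp_all add: faces_def)
  with star(1,2,5) show ?thesis
    using card_rep_complex_fiber[OF assms(1), of "\<Union>r" k d] by simp
qed

lemma weight_rep_complex:
  assumes "simplicial_complex X" "k < d" "r \<in> rep_complex d k X"
  shows "weight (d - k) (rep_complex d k X) r
       = weight d X (\<Union>r) / real (card {S \<in> rep_complex d k X. \<Union>S = \<Union>r})"
proof -
  define n where "n = card (\<Union>r)"
  define N where "N = card {\<tau> \<in> faces X d. \<Union>r \<subseteq> \<tau>}"
  define M where "M = card (faces X d)"
  define c where "c = card {S \<in> rep_complex d k X. \<Union>S = \<Union>r}"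
  define e where "e = card (\<Inter>r) choose k"
  have n: "n = card r + k" "card r \<le> d - k + 1"
    unfolding n_def using Union_rep_complex(2) card_rep_complex_le assms(3) by simp_all
  have ce: "c * e = n choose k"
    unfolding c_def e_def n_def by (rule card_fiber_mult_choose_Inter_rep_complex[OF assms(1,3)])
  then have "e > 0"
    using n(1) by (intro Nat.gr0I) simp
  have "((d + 1) choose k) * ((d - k + 1) choose card r) = ((d + 1) choose n) * (c * e)"
    unfolding ce using choose_mult[of k n "d + 1"] n assms(2) by (simp add: Suc_diff_le)
  then have "((d - k + 1) choose card r) * (M * ((d + 1) choose k))
      = c * (((d + 1) choose n) * M) * e"
    by (simp add: ac_simps)
  then have denominators: "real ((d - k + 1) choose card r) * real (M * ((d + 1) choose k))
      = real c * (real ((d + 1) choose n) * real M) * real e"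
    unfolding of_nat_mult[symmetric] by (rule arg_cong)
  show ?thesis
    unfolding weight_def card_top_faces_rep_complex[OF assms(1,2)]
      card_top_cofaces_rep_complex[OF assms(1,2,3)]
      N_def[symmetric] M_def[symmetric] c_def[symmetric] e_def[symmetric] n_def[symmetric]
      denominators
    using \<open>e > 0\<close> by simp
qed

theorem mainTheorem13:
  fixes X :: "'a set set" and d k i :: nat and \<sigma> :: "'a set" and r :: "'a set set"
  assumes "pure_complex d X"
    and "k < d"
    and "i \<le> d - k"
    and "\<sigma> \<in> faces X (k + i)"
    and "r \<in> rep_complex d k X" and "\<Union>r = \<sigma>"
  shows "weight (d - k) (rep_complex d k X) r =
           (1 / real (card {r' \<in> rep_complex d k X. \<Union>r' = \<sigma>})) * weight d X \<sigma>
         \<and> card {r' \<in> rep_complex d k X. \<Union>r' = \<sigma>} = (if i > 0 then (k + i + 1) choose k else 1)"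
proof -
  have X: "simplicial_complex X"
    using assms(1) by (simp add: pure_complex_def)
  show ?thesis
    using weight_rep_complex[OF X assms(2,5)] card_rep_complex_fiber_face[OF X assms(3,4)]
    unfolding assms(6) by simp
qed

end
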